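(* For any positive integer $D$ there are no points ${\bf p}_1,\dots,{\bf p}_6\in\mathbb R^D$ such that $|{\bf p}_i-{\bf p}_{i+1}|\le 1$ and $|{\bf p}_i-{\bf p}_{i+3}|>2$ for all $i$, indices taken modulo $6$. *)

theory Defs
  imports "HOL-Analysis.Analysis"
begin

end

theory Submission
  imports Defs
begin

text \<open>For a closed hexagon \<open>a b c d e f\<close> in an inner product space, twice the sum of the
squared sides minus the sum of the squared main diagonals is a sum of four squares. So if
every side has length at most \<open>1\<close>, the squared diagonals sum to at most \<open>12\<close> and cannot
all exceed \<open>4\<close>.\<close>

lemma hexagon_sides_diagonals_identity:
  fixes a b c d e f :: "'a::real_inner"
  shows "2 * ((norm (a - b))\<^sup>2 + (norm (b - c))\<^sup>2 + (norm (c - d))\<^sup>2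
            + (norm (d - e))\<^sup>2 + (norm (e - f))\<^sup>2 + (norm (f - a))\<^sup>2)
         - ((norm (a - d))\<^sup>2 + (norm (b - e))\<^sup>2 + (norm (c - f))\<^sup>2)
       = (norm (a - b + c - d + e - f))\<^sup>2 + (norm ((a + d) - (b + e)))\<^sup>2
         + (norm ((b + e) - (c + f)))\<^sup>2 + (norm ((c + f) - (a + d)))\<^sup>2"
  unfolding power2_norm_eq_inner
  by (simp add: inner_diff_left inner_diff_right inner_add_left inner_add_right
      inner_commute algebra_simps)

lemma hexagon_diagonals_le_sides:
  fixes a b c d e f :: "'a::real_inner"
  shows "(dist a d)\<^sup>2 + (dist b e)\<^sup>2 + (dist c f)\<^sup>2
    \<le> 2 * ((dist a b)\<^sup>2 + (dist b c)\<^sup>2 + (dist c d)\<^sup>2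
           + (dist d e)\<^sup>2 + (dist e f)\<^sup>2 + (dist f a)\<^sup>2)"
  using hexagon_sides_diagonals_identity[of a b c d e f]
  unfolding dist_norm by (smt (verit) zero_le_power2)

lemma hexagon_unit_sides_short_diagonal:
  fixes a b c d e f :: "'a::real_inner"
  assumes "dist a b \<le> 1" "dist b c \<le> 1" "dist c d \<le> 1"
    and "dist d e \<le> 1" "dist e f \<le> 1" "dist f a \<le> 1"
  shows "dist a d \<le> 2 \<or> dist b e \<le> 2 \<or> dist c f \<le> 2"
proof (rule ccontr)
  have square_le_one: "(dist x y)\<^sup>2 \<le> 1" if "dist x y \<le> 1" for x y :: 'a
    using that by (simp add: power_le_one)
  have square_gt_four: "4 < (dist x y)\<^sup>2" if "2 < dist x y" for x y :: 'a
    using power_strict_mono[of 2 "dist x y" 2] that by simp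
  assume "\<not> ?thesis"
  then have "12 < (dist a d)\<^sup>2 + (dist b e)\<^sup>2 + (dist c f)\<^sup>2"
    using square_gt_four[of a d] square_gt_four[of b e] square_gt_four[of c f] by linarith
  moreover have "(dist a b)\<^sup>2 + (dist b c)\<^sup>2 + (dist c d)\<^sup>2
      + (dist d e)\<^sup>2 + (dist e f)\<^sup>2 + (dist f a)\<^sup>2 \<le> 6"
    using assms[THEN square_le_one] by linarith
  moreover note hexagon_diagonals_le_sides[where a = a and b = b and c = c
      and d = d and e = e and f = f]
  ultimately show False
    by (smt (verit))
qed

theorem mainTheorem13:
  fixes p :: "nat \<Rightarrow> real ^ 'n"
  shows "\<not> ((\<forall>i<6. dist (p i) (p ((i + 1) mod 6)) \<le> 1) \<and>
             (\<forall>i<6. dist (p i) (p ((i + 3) mod 6)) > 2))"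
proof
  assume "(\<forall>i<6. dist (p i) (p ((i + 1) mod 6)) \<le> 1) \<and>
          (\<forall>i<6. dist (p i) (p ((i + 3) mod 6)) > 2)"
  then have sides: "\<forall>i<6. dist (p i) (p ((i + 1) mod 6)) \<le> 1"
    and diagonals: "\<forall>i<6. dist (p i) (p ((i + 3) mod 6)) > 2"
    by blast+
  have "dist (p 0) (p 1) \<le> 1" "dist (p 1) (p 2) \<le> 1" "dist (p 2) (p 3) \<le> 1"
      "dist (p 3) (p 4) \<le> 1" "dist (p 4) (p 5) \<le> 1" "dist (p 5) (p 0) \<le> 1"
    using sides[rule_format, of 0] sides[rule_format, of 1] sides[rule_format, of 2]
      sides[rule_format, of 3] sides[rule_format, of 4] sides[rule_format, of 5]
    \<comment> \<open>without \<open>One_nat_def\<close> the index \<open>1 + 1\<close> becomes the numeral \<open>2\<close>, not \<open>Suc (Suc 0)\<close>\<close>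
    by (simp_all del: One_nat_def)
  then have "dist (p 0) (p 3) \<le> 2 \<or> dist (p 1) (p 4) \<le> 2 \<or> dist (p 2) (p 5) \<le> 2"
    by (rule hexagon_unit_sides_short_diagonal)
  moreover have "dist (p 0) (p 3) > 2" "dist (p 1) (p 4) > 2" "dist (p 2) (p 5) > 2"
    using diagonals[rule_format, of 0] diagonals[rule_format, of 1]
      diagonals[rule_format, of 2]
    by (simp_all del: One_nat_def)
  ultimately show False
    by linarith
qed

end
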